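(* Let $r \geq 2$, let $H$ be a digraph (possibly with loops), and let $D$ be an $H$-colored $r$-transitive digraph. For every $l \geq r-1$ and every $k \geq 2$, $D$ has a $(k,l,H)$-kernel.
   Context: All digraphs are finite. A digraph $D$ is $r$-transitive if for all distinct $u,v\in V(D)$, whenever there is a directed $uv$-path of length $r$, the arc $(u,v)$ belongs to $A(D)$. $D$ has no loops and comes with a map $\rho: A(D)\to V(H)$. For a walk $W=(x_0,\ldots,x_n)$ in $D$, there is an obstruction on $x_i$ if $(\rho(x_{i-1},x_i),\rho(x_i,x_{i+1})) \notin A(H)$; for an open walk this is considered at internal vertices $x_i$, $1\le i\le n-1$, for a closed walk at all $i\in\{0,\ldots,n-1\}$ with indices modulo $n$. $O_H(W)$ is the set of indices with an obstruction; the $H$-length is $l_H(W)=|O_H(W)|+1$ for open $W$ and $|O_H(W)|$ for closed $W$. For $k\ge 2$ and $l\ge 1$, a $(k,l,H)$-kernel is a set $S\subseteq V(D)$ such that for every two distinct $u,v\in S$ every directed $uv$-path in $D$ has $H$-length at least $k$, and for every $x\in V(D)\setminus S$ there is a directed path from $x$ to a vertex of $S$ of $H$-length at most $l$. *)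

theory Defs
  imports Main
begin

definition dwalk :: "('a \<times> 'a) set \<Rightarrow> 'a list \<Rightarrow> bool" where
  "dwalk A xs \<longleftrightarrow> xs \<noteq> [] \<and> (\<forall>i. Suc i < length xs \<longrightarrow> (xs ! i, xs ! Suc i) \<in> A)"

definition dpath :: "('a \<times> 'a) set \<Rightarrow> 'a list \<Rightarrow> bool" where
  "dpath A xs \<longleftrightarrow> dwalk A xs \<and> distinct xs"

definition dpath_from_to :: "('a \<times> 'a) set \<Rightarrow> 'a \<Rightarrow> 'a \<Rightarrow> 'a list \<Rightarrow> bool" where
  "dpath_from_to A u v xs \<longleftrightarrow> dpath A xs \<and> hd xs = u \<and> last xs = v"

definition r_transitive :: "'a set \<Rightarrow> ('a \<times> 'a) set \<Rightarrow> nat \<Rightarrow> bool" where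
  "r_transitive V A r \<longleftrightarrow>
     (\<forall>u\<in>V. \<forall>v\<in>V. \<forall>xs. u \<noteq> v \<and> dpath_from_to A u v xs \<and> length xs = r + 1
        \<longrightarrow> (u, v) \<in> A)"

definition obstructions_open :: "('b \<times> 'b) set \<Rightarrow> ('a \<times> 'a \<Rightarrow> 'b) \<Rightarrow> 'a list \<Rightarrow> nat set" where
  "obstructions_open AH \<rho> xs =
     {i. 1 \<le> i \<and> Suc i < length xs \<and>
         (\<rho> (xs ! (i - 1), xs ! i), \<rho> (xs ! i, xs ! Suc i)) \<notin> AH}"

definition H_length_open :: "('b \<times> 'b) set \<Rightarrow> ('a \<times> 'a \<Rightarrow> 'b) \<Rightarrow> 'a list \<Rightarrow> nat" where
  "H_length_open AH \<rho> xs = card (obstructions_open AH \<rho> xs) + 1"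

definition klH_kernel ::
  "'a set \<Rightarrow> ('a \<times> 'a) set \<Rightarrow> ('b \<times> 'b) set \<Rightarrow> ('a \<times> 'a \<Rightarrow> 'b) \<Rightarrow> nat \<Rightarrow> nat \<Rightarrow> 'a set \<Rightarrow> bool" where
  "klH_kernel V A AH \<rho> k l S \<longleftrightarrow>
     S \<subseteq> V \<and>
     (\<forall>u\<in>S. \<forall>v\<in>S. \<forall>xs. u \<noteq> v \<and> dpath_from_to A u v xs \<longrightarrow> H_length_open AH \<rho> xs \<ge> k) \<and>
     (\<forall>x\<in>V - S. \<exists>s\<in>S. \<exists>xs. dpath_from_to A x s xs \<and> H_length_open AH \<rho> xs \<le> l)"

end

theory Submission
  imports Defs
begin

text \<open>Choose one vertex in every terminal strong component of D. No path joins two chosen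
  vertices, so the independence condition holds vacuously, and every vertex reaches a chosen one.
  By r-transitivity a shortest such path has fewer than r arcs (a path with r arcs is bypassed by
  the arc from its first to its last vertex), and the H-length of a path never exceeds its number
  of arcs, so it is at most r - 1 \<le> l.\<close>

definition dwalk_from_to :: "('a \<times> 'a) set \<Rightarrow> 'a \<Rightarrow> 'a \<Rightarrow> 'a list \<Rightarrow> bool" where
  "dwalk_from_to A u v xs \<longleftrightarrow> dwalk A xs \<and> hd xs = u \<and> last xs = v"

lemma dwalk_Nil [simp]: "\<not> dwalk A []"
  by (simp add: dwalk_def)

lemma dwalk_singleton [simp]: "dwalk A [x]"
  by (simp add: dwalk_def)

lemma dwalk_Cons_Cons [simp]: "dwalk A (x # y # ys) \<longleftrightarrow> (x, y) \<in> A \<and> dwalk A (y # ys)"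
  unfolding dwalk_def by (auto simp: less_Suc_eq_0_disj)

lemma dwalk_append_Cons: "dwalk A (xs @ y # ys) \<longleftrightarrow> dwalk A (xs @ [y]) \<and> dwalk A (y # ys)"
  by (induction xs rule: induct_list012) auto

lemma dwalk_take: "dwalk A xs \<Longrightarrow> 0 < n \<Longrightarrow> dwalk A (take n xs)"
  unfolding dwalk_def by auto

lemma dwalk_drop: "dwalk A xs \<Longrightarrow> n < length xs \<Longrightarrow> dwalk A (drop n xs)"
  by (metis Cons_nth_drop_Suc append_take_drop_id dwalk_append_Cons)

lemma dwalk_rtrancl: "dwalk A xs \<Longrightarrow> (hd xs, last xs) \<in> A\<^sup>*"
  by (induction xs rule: induct_list012) (auto intro: converse_rtrancl_into_rtrancl)

lemma rtrancl_iff_ex_dwalk_from_to: "(x, y) \<in> A\<^sup>* \<longleftrightarrow> (\<exists>xs. dwalk_from_to A x y xs)"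
proof
  assume "(x, y) \<in> A\<^sup>*"
  then show "\<exists>xs. dwalk_from_to A x y xs"
  proof (induction rule: converse_rtrancl_induct)
    case base
    show ?case by (auto simp: dwalk_from_to_def intro: exI[of _ "[y]"])
  next
    case (step x z)
    then obtain zs where "dwalk_from_to A z y zs" by blast
    then have "dwalk_from_to A x y (x # zs)"
      using step.hyps(1) by (cases zs) (auto simp: dwalk_from_to_def)
    then show ?case by blast
  qed
qed (auto simp: dwalk_from_to_def dest: dwalk_rtrancl)

lemma dpath_from_to_iff: "dpath_from_to A u v xs \<longleftrightarrow> dwalk_from_to A u v xs \<and> distinct xs"
  unfolding dpath_from_to_def dpath_def dwalk_from_to_def by blast

lemma shortest_dwalk_distinct:
  assumes walk: "dwalk_from_to A x y ys"
    and shortest: "\<And>zs. dwalk_from_to A x y zs \<Longrightarrow> length ys \<le> length zs"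
  shows "distinct ys"
proof (rule ccontr)
  assume "\<not> distinct ys"
  then obtain a v b c where ys: "ys = a @ v # (b @ v # c)"
    using not_distinct_decomp by fastforce
  have "dwalk A (a @ [v])" "dwalk A ((v # b) @ v # c)"
    using walk dwalk_append_Cons[of A a v "b @ v # c"] by (auto simp: ys dwalk_from_to_def)
  then have "dwalk A (a @ v # c)"
    using dwalk_append_Cons by metis
  then have "dwalk_from_to A x y (a @ v # c)"
    using walk unfolding ys dwalk_from_to_def by (cases a) auto
  with shortest show False
    unfolding ys by fastforce
qed

lemma shortest_dwalk_length_le:
  assumes AV: "A \<subseteq> V \<times> V" and rt: "r_transitive V A r" and r: "2 \<le> r" and x: "x \<in> V"
    and walk: "dwalk_from_to A x y ys"
    and shortest: "\<And>zs. dwalk_from_to A x y zs \<Longrightarrow> length ys \<le> length zs"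
  shows "length ys \<le> r"
proof (rule ccontr)
  assume "\<not> length ys \<le> r"
  then have long: "r < length ys" by simp
  let ?u = "ys ! 0" and ?v = "ys ! r"
  have ys: "dwalk A ys" "hd ys = x" "last ys = y"
    using walk by (auto simp: dwalk_from_to_def)
  have u: "?u = x"
    using ys(2) long by (cases ys) auto
  have "distinct ys"
    using walk shortest by (rule shortest_dwalk_distinct)
  then have "?u \<noteq> ?v"
    using long r nth_eq_iff_index_eq[of ys 0 r] by fastforce
  have "dwalk A (take (Suc r) ys)"
    using ys(1) by (rule dwalk_take) simp
  moreover have "hd (take (Suc r) ys) = ?u"
    using long by (cases ys) auto
  moreover have "last (take (Suc r) ys) = ?v"
    using long by (simp add: take_Suc_conv_app_nth)
  ultimately have "dpath_from_to A ?u ?v (take (Suc r) ys)"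
    using \<open>distinct ys\<close> by (simp add: dpath_from_to_iff dwalk_from_to_def)
  moreover have "?u \<in> V"
    using x u by simp
  moreover have "(ys ! (r - 1), ?v) \<in> A"
    using ys(1) long r unfolding dwalk_def by (metis Suc_diff_le diff_Suc_1 le_trans one_le_numeral)
  then have "?v \<in> V"
    using AV by blast
  ultimately have "(?u, ?v) \<in> A"
    using rt \<open>?u \<noteq> ?v\<close> long unfolding r_transitive_def by fastforce
  moreover have "drop r ys = ?v # drop (Suc r) ys"
    using long by (rule Cons_nth_drop_Suc[symmetric])
  ultimately have "dwalk A (?u # drop r ys)"
    using dwalk_drop[OF ys(1) long] by simp
  then have "dwalk_from_to A x y (?u # drop r ys)"
    using ys u long by (simp add: dwalk_from_to_def)
  with shortest long r show False by fastforce
qed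

lemma r_transitive_short_dpath:
  assumes "A \<subseteq> V \<times> V" "r_transitive V A r" "2 \<le> r" "x \<in> V" "(x, y) \<in> A\<^sup>*"
  shows "\<exists>ys. dpath_from_to A x y ys \<and> length ys \<le> r"
proof -
  obtain ys where walk: "dwalk_from_to A x y ys"
    and shortest: "\<And>zs. dwalk_from_to A x y zs \<Longrightarrow> length ys \<le> length zs"
    using assms(5) ex_has_least_nat[of "dwalk_from_to A x y" _ length]
    unfolding rtrancl_iff_ex_dwalk_from_to by metis
  have "distinct ys" "length ys \<le> r"
    using shortest_dwalk_distinct[OF walk shortest]
      shortest_dwalk_length_le[OF assms(1-4) walk shortest] by auto
  with walk show ?thesis
    by (auto simp: dpath_from_to_iff)
qed

lemma H_length_open_less_length:
  assumes "2 \<le> length xs"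
  shows "H_length_open AH \<rho> xs < length xs"
proof -
  have "obstructions_open AH \<rho> xs \<subseteq> {1..<length xs - 1}"
    unfolding obstructions_open_def by auto
  then have "card (obstructions_open AH \<rho> xs) \<le> length xs - 2"
    by (metis card_atLeastLessThan card_mono finite_atLeastLessThan diff_diff_left one_add_one)
  with assms show ?thesis
    unfolding H_length_open_def by linarith
qed

definition in_terminal_component :: "('a \<times> 'a) set \<Rightarrow> 'a \<Rightarrow> bool" where
  "in_terminal_component A v \<longleftrightarrow> (\<forall>w. (v, w) \<in> A\<^sup>* \<longrightarrow> (w, v) \<in> A\<^sup>*)"

lemma finite_reaches_terminal_component:
  assumes "finite A"
  shows "\<exists>w. (x, w) \<in> A\<^sup>* \<and> in_terminal_component A w"
proof -
  obtain w where xw: "(x, w) \<in> A\<^sup>*"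
    and least: "\<And>w'. (x, w') \<in> A\<^sup>* \<Longrightarrow> card (A\<^sup>* `` {w}) \<le> card (A\<^sup>* `` {w'})"
    using ex_has_least_nat[of "\<lambda>w. (x, w) \<in> A\<^sup>*" x "\<lambda>w. card (A\<^sup>* `` {w})"] by blast
  have "(w', w) \<in> A\<^sup>*" if ww': "(w, w') \<in> A\<^sup>*" for w'
  proof -
    have "A\<^sup>* `` {w'} \<subseteq> A\<^sup>* `` {w}"
      using ww' by (auto intro: rtrancl_trans)
    moreover have "card (A\<^sup>* `` {w}) \<le> card (A\<^sup>* `` {w'})"
      using least xw ww' by (meson rtrancl_trans)
    ultimately have "A\<^sup>* `` {w'} = A\<^sup>* `` {w}"
      using assms by (simp add: card_seteq)
    then show ?thesis
      by blast
  qed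
  with xw show ?thesis
    unfolding in_terminal_component_def by blast
qed

lemma ex_reachability_kernel:
  assumes fin: "finite A" and AV: "A \<subseteq> V \<times> V"
  shows "\<exists>S\<subseteq>V. (\<forall>u\<in>S. \<forall>v\<in>S. (u, v) \<in> A\<^sup>* \<longrightarrow> u = v) \<and> (\<forall>x\<in>V. \<exists>s\<in>S. (x, s) \<in> A\<^sup>*)"
proof -
  define rep where "rep v = (SOME u. (v, u) \<in> A\<^sup>* \<and> (u, v) \<in> A\<^sup>*)" for v
  define S where "S = rep ` {v \<in> V. in_terminal_component A v}"
  have rep: "(v, rep v) \<in> A\<^sup>* \<and> (rep v, v) \<in> A\<^sup>*" for v
    unfolding rep_def by (rule someI[of _ v]) simp
  have rep_eq: "rep v = rep w" if "(v, w) \<in> A\<^sup>*" "(w, v) \<in> A\<^sup>*" for v w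
  proof -
    have "(v, u) \<in> A\<^sup>* \<and> (u, v) \<in> A\<^sup>* \<longleftrightarrow> (w, u) \<in> A\<^sup>* \<and> (u, w) \<in> A\<^sup>*" for u
      using that rtrancl_trans[of _ _ A] by metis
    then show ?thesis
      unfolding rep_def by simp
  qed
  have closed: "u \<in> V" if "(v, u) \<in> A\<^sup>*" "v \<in> V" for u v
    using that AV by (induction rule: rtrancl_induct) auto
  have "S \<subseteq> V"
    using closed rep unfolding S_def by blast
  moreover have "u = v" if "u \<in> S" "v \<in> S" "(u, v) \<in> A\<^sup>*" for u v
  proof -
    obtain u' v' where u': "in_terminal_component A u'" "u = rep u'" and v': "v = rep v'"
      using \<open>u \<in> S\<close> \<open>v \<in> S\<close> unfolding S_def by blast
    have "(u', v') \<in> A\<^sup>*"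
      using rep[of u'] rep[of v'] u'(2) v' \<open>(u, v) \<in> A\<^sup>*\<close> rtrancl_trans[of _ _ A] by metis
    moreover have "(v', u') \<in> A\<^sup>*"
      using calculation u'(1) unfolding in_terminal_component_def by blast
    ultimately have "rep u' = rep v'"
      by (rule rep_eq)
    with u'(2) v' show "u = v"
      by simp
  qed
  moreover have "\<exists>s\<in>S. (x, s) \<in> A\<^sup>*" if "x \<in> V" for x
  proof -
    obtain w where xw: "(x, w) \<in> A\<^sup>*" and w: "in_terminal_component A w"
      using finite_reaches_terminal_component[OF fin] by blast
    then have "rep w \<in> S"
      using closed[OF xw that] unfolding S_def by blast
    moreover have "(x, rep w) \<in> A\<^sup>*"
      using xw rep[of w] by (meson rtrancl_trans)
    ultimately show ?thesis ..
  qed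
  ultimately show ?thesis
    by (intro exI[of _ S] conjI ballI impI) auto
qed

theorem theorem11:
  fixes V :: "'a set" and A :: "('a \<times> 'a) set"
    and VH :: "'b set" and AH :: "('b \<times> 'b) set"
    and \<rho> :: "'a \<times> 'a \<Rightarrow> 'b"
    and r k l :: nat
  assumes "finite V" and "A \<subseteq> V \<times> V" and "\<forall>x. (x, x) \<notin> A"
    and "finite VH" and "AH \<subseteq> VH \<times> VH"
    and "\<forall>e\<in>A. \<rho> e \<in> VH"
    and "r \<ge> 2" and "r_transitive V A r"
    and "l \<ge> r - 1" and "k \<ge> 2"
  shows "\<exists>S. klH_kernel V A AH \<rho> k l S"
proof -
  have "finite A"
    using assms(1,2) finite_subset by blast
  then obtain S where "S \<subseteq> V"
    and independent: "\<And>u v. u \<in> S \<Longrightarrow> v \<in> S \<Longrightarrow> (u, v) \<in> A\<^sup>* \<Longrightarrow> u = v"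
    and absorbing: "\<And>x. x \<in> V \<Longrightarrow> \<exists>s\<in>S. (x, s) \<in> A\<^sup>*"
    using ex_reachability_kernel[OF _ assms(2)] by metis
  have "\<exists>s\<in>S. \<exists>ys. dpath_from_to A x s ys \<and> H_length_open AH \<rho> ys \<le> l" if x: "x \<in> V - S" for x
  proof -
    obtain s where "s \<in> S" "(x, s) \<in> A\<^sup>*" "x \<noteq> s"
      using absorbing x by blast
    then obtain ys where ys: "dpath_from_to A x s ys" "length ys \<le> r"
      using r_transitive_short_dpath[OF assms(2,8,7)] x by blast
    then have "2 \<le> length ys"
      using \<open>x \<noteq> s\<close> by (cases ys; cases "tl ys") (auto simp: dpath_from_to_iff dwalk_from_to_def)
    then have "H_length_open AH \<rho> ys \<le> l"
      using H_length_open_less_length[of ys AH \<rho>] ys(2) assms(9) by linarith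
    with \<open>s \<in> S\<close> ys(1) show ?thesis
      by blast
  qed
  moreover have "\<not> dpath_from_to A u v xs" if "u \<in> S" "v \<in> S" "u \<noteq> v" for u v xs
    using independent[OF that(1,2)] that(3)
    by (auto simp: dpath_from_to_iff rtrancl_iff_ex_dwalk_from_to)
  ultimately show ?thesis
    using \<open>S \<subseteq> V\<close> unfolding klH_kernel_def by blast
qed

end
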